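(* Let $\{P_n\}$, $\{R_n\}$, $\{S_n\}$ be Brenke polynomial sets with exponential generating functions $A_1(t)B_1(xt)$, $A_2(t)B_2(xt)$, $A_3(t)B_3(xt)$ respectively, where $A_i(t)=\sum_ka^{(i)}_kt^k$, $B_i(t)=\sum_kb^{(i)}_kt^k$, $a^{(i)}_0b^{(i)}_k\ne0$ for all $k$, $i=1,2,3$. Define $L_{ij}(k)$ by $R_i(x)S_j(x)=\sum_{k=0}^{i+j}L_{ij}(k)P_k(x)$. Let $\Omega$ be the linear map from formal power series in one variable $u$ to formal power series in two variables $s,t$ defined termwise by $$\Omega(u^n)=\sum_{l=0}^n\frac{b^{(2)}_l\,b^{(3)}_{n-l}}{b^{(1)}_n}s^lt^{n-l}$$ (in the paper's notation $\Omega=\theta^{(2)}_s\theta^{(3)}_t(\theta^{(1)}_{s+t})^{-1}$ applied to functions of $s+t$, where $\theta^{(i)}(t^n)=n!\,b^{(i)}_nt^n$). Then for every $k\ge0$, $$\frac{A_2(s)A_3(t)}{k!}\,\Omega\!\left(\frac{u^k}{A_1(u)}\right)=\sum_{i,j\ge0}\frac{L_{ij}(k)}{i!\,j!}s^it^j .$$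
   Context: A Brenke polynomial set is a sequence of polynomials $P_n$ with $\deg P_n=n$ generated as formal power series in $t$ by $A(t)B(xt)=\sum_{n\ge0}P_n(x)t^n/n!$, where $A(0)\neq0$ and all Taylor coefficients of $B$ are nonzero. $L_{ij}(k)$ is understood to be $0$ for $k>i+j$. *)

theory Defs
  imports "HOL-Computational_Algebra.Polynomial" "HOL-Computational_Algebra.Formal_Power_Series"
begin

text \<open>Brenke polynomial generated by A(t)B(xt) = \<Sum> P_n(x) t^n / n!:
  P_n(x) = n! \<Sum>_{k\<le>n} a_{n-k} b_k x^k.\<close>
definition brenke_poly :: "'a::field_char_0 fps \<Rightarrow> 'a fps \<Rightarrow> nat \<Rightarrow> 'a poly" where
  "brenke_poly A B n =
     (\<Sum>k\<le>n. monom (fact n * fps_nth A (n - k) * fps_nth B k) k)"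

definition brenke_gf :: "'a::field_char_0 fps \<Rightarrow> 'a fps \<Rightarrow> bool" where
  "brenke_gf A B \<longleftrightarrow> fps_nth A 0 \<noteq> 0 \<and> (\<forall>k. fps_nth B k \<noteq> 0)"

text \<open>Formal power series in two variables s,t represented by their coefficient
  function: F i j is the coefficient of s^i t^j.\<close>
type_synonym 'a fps2 = "nat \<Rightarrow> nat \<Rightarrow> 'a"

definition Omega :: "'a::field_char_0 fps \<Rightarrow> 'a fps \<Rightarrow> 'a fps \<Rightarrow> 'a fps \<Rightarrow> 'a fps2" where
  "Omega B1 B2 B3 f = (\<lambda>l m. fps_nth f (l + m) * fps_nth B2 l * fps_nth B3 m / fps_nth B1 (l + m))"

definition mult_st :: "'a::field_char_0 fps \<Rightarrow> 'a fps \<Rightarrow> 'a fps2 \<Rightarrow> 'a fps2" where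
  "mult_st A C F = (\<lambda>i j. \<Sum>p\<le>i. \<Sum>q\<le>j. fps_nth A p * fps_nth C q * F (i - p) (j - q))"

end

theory Submission
  imports Defs
begin

text \<open>Pair a polynomial coefficientwise with the sequence f_n / b1_n, where b1 = B1.
  This linear functional sends P_m to m! (f A1)_m, so for f = u^k / A1 it is biorthogonal to
  the P_m and extracts k! L(i,j,k) from R_i S_j. Evaluated termwise on the product R_i S_j,
  the same functional is i! j! times the (i,j) coefficient of A2(s) A3(t) Omega(f).\<close>

definition coeff_pairing :: "(nat \<Rightarrow> 'a::comm_semiring_1) \<Rightarrow> 'a poly \<Rightarrow> 'a" where
  "coeff_pairing g p = (\<Sum>n\<le>degree p. coeff p n * g n)"

lemma coeff_pairing_bounded:
  assumes "degree p \<le> M"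
  shows "coeff_pairing g p = (\<Sum>n\<le>M. coeff p n * g n)"
  unfolding coeff_pairing_def
  using assms by (intro sum.mono_neutral_left) (auto simp: coeff_eq_0)

lemma coeff_pairing_add: "coeff_pairing g (p + q) = coeff_pairing g p + coeff_pairing g q"
proof -
  define M where "M = max (degree p) (degree q)"
  have "degree (p + q) \<le> M" "degree p \<le> M" "degree q \<le> M"
    unfolding M_def using degree_add_le_max by auto
  then show ?thesis
    by (simp add: coeff_pairing_bounded[of _ M] sum.distrib distrib_right)
qed

lemma coeff_pairing_smult: "coeff_pairing g (smult c p) = c * coeff_pairing g p"
proof -
  have "coeff_pairing g (smult c p) = (\<Sum>n\<le>degree p. coeff (smult c p) n * g n)"
    by (rule coeff_pairing_bounded[OF degree_smult_le])
  then show ?thesis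
    by (simp add: coeff_pairing_def sum_distrib_left mult.assoc)
qed

lemma coeff_pairing_sum:
  "coeff_pairing g (\<Sum>k\<in>K. p k) = (\<Sum>k\<in>K. coeff_pairing g (p k))"
proof (induction K rule: infinite_finite_induct)
  case (insert k K)
  then show ?case by (simp add: coeff_pairing_add)
qed (simp_all add: coeff_pairing_def)

lemma coeff_pairing_mult:
  assumes "degree p \<le> m" and "degree q \<le> n"
  shows "coeff_pairing g (p * q) = (\<Sum>a\<le>m. \<Sum>b\<le>n. coeff p a * coeff q b * g (a + b))"
proof -
  have "degree (p * q) \<le> m + n"
    using assms degree_mult_le[of p q] by linarith
  then have "coeff_pairing g (p * q) = (\<Sum>c\<le>m + n. \<Sum>a\<le>c. coeff p a * coeff q (c - a) * g (a + (c - a)))"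
    by (simp add: coeff_pairing_bounded coeff_mult sum_distrib_right)
  also have "\<dots> = (\<Sum>(a, b)\<in>{(a, b). a + b \<le> m + n}. coeff p a * coeff q b * g (a + b))"
    by (rule sum.triangle_reindex_eq[symmetric])
  also have "\<dots> = (\<Sum>(a, b)\<in>{..m} \<times> {..n}. coeff p a * coeff q b * g (a + b))"
  proof (rule sum.mono_neutral_right)
    show "finite {(a, b). a + b \<le> m + n}"
      by (rule finite_subset[of _ "{..m + n} \<times> {..m + n}"]) auto
    have "coeff p a * coeff q b * g (a + b) = 0" if "(a, b) \<notin> {..m} \<times> {..n}" for a b
      using that assms coeff_eq_0[of p a] coeff_eq_0[of q b] by auto
    then show "\<forall>i\<in>{(a, b). a + b \<le> m + n} - {..m} \<times> {..n}.
                 (case i of (a, b) \<Rightarrow> coeff p a * coeff q b * g (a + b)) = 0"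
      by auto
  qed auto
  finally show ?thesis
    by (simp add: sum.cartesian_product)
qed

lemma coeff_brenke_poly:
  "coeff (brenke_poly A B n) m = (if m \<le> n then fact n * fps_nth A (n - m) * fps_nth B m else 0)"
  unfolding brenke_poly_def by (simp add: coeff_sum coeff_monom)

lemma degree_brenke_poly_le: "degree (brenke_poly A B n) \<le> n"
  by (rule degree_le) (simp add: coeff_brenke_poly)

lemma coeff_pairing_brenke_poly:
  fixes A B f :: "'a::field_char_0 fps"
  assumes "\<And>n. fps_nth B n \<noteq> 0"
  shows "coeff_pairing (\<lambda>n. fps_nth f n / fps_nth B n) (brenke_poly A B m)
           = fact m * fps_nth (f * A) m"
proof -
  have "coeff_pairing (\<lambda>n. fps_nth f n / fps_nth B n) (brenke_poly A B m)
          = (\<Sum>n\<le>m. fact m * (fps_nth f n * fps_nth A (m - n)))"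
    using assms
    by (simp add: coeff_pairing_bounded[OF degree_brenke_poly_le] coeff_brenke_poly ac_simps)
  then show ?thesis
    by (simp add: fps_mult_nth sum_distrib_left atMost_atLeast0)
qed

lemma sum_atMost_reflect:
  fixes h :: "nat \<Rightarrow> 'a::comm_monoid_add"
  shows "(\<Sum>p\<le>n. h (n - p)) = (\<Sum>p\<le>n. h p)"
  using sum.atLeastAtMost_rev[of h 0 n] by (simp add: atMost_atLeast0)

lemma mult_st_Omega_eq_coeff_pairing:
  "fact i * fact j * mult_st A2 A3 (Omega B1 B2 B3 f) i j
     = coeff_pairing (\<lambda>n. fps_nth f n / fps_nth B1 n)
         (brenke_poly A2 B2 i * brenke_poly A3 B3 j)"
proof -
  define R where "R = brenke_poly A2 B2 i"
  define S where "S = brenke_poly A3 B3 j"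
  define g where "g = (\<lambda>n. fps_nth f n / fps_nth B1 n)"
  have "fact i * fact j * mult_st A2 A3 (Omega B1 B2 B3 f) i j
      = (\<Sum>p\<le>i. \<Sum>q\<le>j. coeff R (i - p) * coeff S (j - q) * g ((i - p) + (j - q)))"
    unfolding mult_st_def Omega_def sum_distrib_left
    by (intro sum.cong refl) (simp add: R_def S_def g_def coeff_brenke_poly)
  also have "\<dots> = (\<Sum>p\<le>i. \<Sum>q\<le>j. coeff R p * coeff S q * g (p + q))"
    by (subst sum_atMost_reflect[of "\<lambda>p. \<Sum>q\<le>j. coeff R p * coeff S (j - q) * g (p + (j - q))"])
       (intro sum.cong refl sum_atMost_reflect[of "\<lambda>q. coeff R _ * coeff S q * g (_ + q)"])
  also have "\<dots> = coeff_pairing g (R * S)"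
    unfolding R_def S_def by (rule coeff_pairing_mult[symmetric]) (rule degree_brenke_poly_le)+
  finally show ?thesis
    by (simp add: R_def S_def g_def)
qed

theorem mainTheorem8:
  fixes A1 B1 A2 B2 A3 B3 :: "'a::field_char_0 fps"
    and L :: "nat \<Rightarrow> nat \<Rightarrow> nat \<Rightarrow> 'a"
  assumes "brenke_gf A1 B1" and "brenke_gf A2 B2" and "brenke_gf A3 B3"
    and L_expand: "\<And>i j. brenke_poly A2 B2 i * brenke_poly A3 B3 j
                      = (\<Sum>k\<le>i + j. smult (L i j k) (brenke_poly A1 B1 k))"
    and L_zero: "\<And>i j k. k > i + j \<Longrightarrow> L i j k = 0"
  shows "\<forall>k i j. mult_st A2 A3 (Omega B1 B2 B3 (fps_X ^ k * inverse A1)) i j / fact k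
                  = L i j k / (fact i * fact j)"
proof (intro allI)
  fix k i j :: nat
  define f where "f = fps_X ^ k * inverse A1"
  have A1_0: "fps_nth A1 0 \<noteq> 0" and B1_nz: "\<And>n. fps_nth B1 n \<noteq> 0"
    using assms(1) by (auto simp: brenke_gf_def)
  have "f * A1 = fps_X ^ k"
    using inverse_mult_eq_1[OF A1_0] by (simp add: f_def mult.assoc)
  then have "fact i * fact j * mult_st A2 A3 (Omega B1 B2 B3 f) i j
      = (\<Sum>k'\<le>i + j. L i j k' * (fact k' * (if k' = k then 1 else 0)))"
    by (simp add: mult_st_Omega_eq_coeff_pairing L_expand coeff_pairing_sum
                  coeff_pairing_smult coeff_pairing_brenke_poly[OF B1_nz] fps_X_power_nth)
  also have "\<dots> = L i j k * fact k"
    using L_zero[of i j k] by (auto simp: sum.delta' if_distrib cong: if_cong)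
  finally show "mult_st A2 A3 (Omega B1 B2 B3 (fps_X ^ k * inverse A1)) i j / fact k
                  = L i j k / (fact i * fact j)"
    unfolding f_def by (simp add: field_simps)
qed

end
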